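(* Let $\alpha,\beta$ be nonzero algebraic integers with $\alpha/\beta$ not a root of unity, and let $L_n=L_n(\alpha,\beta)=\frac{\alpha^n-\beta^n}{\alpha-\beta}$. Suppose that for some integer $m\ge2$, $L_n^m\in\mathbb Z$ for all $n\ge0$. Then there exists an algebraic integer $\gamma$ with $\gamma^m\in\mathbb Q$ and $\alpha=\gamma\alpha'$, $\beta=\gamma\beta'$, such that either $L_n(\alpha',\beta')\in\mathbb Q$ for all $n$, or $m$ is even and there are coprime integers $r,s$ with $\alpha'=\sqrt r+\sqrt s$, $\beta'=\sqrt r-\sqrt s$, so that $L_n(\alpha',\beta')^2\in\mathbb Q$ for all $n$.
   Context: $L_n(x,y)=(x^n-y^n)/(x-y)$. *)

theory Defs
  imports "HOL-Computational_Algebra.Computational_Algebra"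
begin

definition lucas :: "complex \<Rightarrow> complex \<Rightarrow> nat \<Rightarrow> complex" where
  "lucas x y n = (x ^ n - y ^ n) / (x - y)"

end

theory Submission
  imports Defs
begin

text \<open>Normalise by \<open>\<gamma> = \<alpha> + \<beta>\<close>: then \<open>p = \<alpha>/\<gamma>\<close> and \<open>q = \<beta>/\<gamma>\<close> satisfy \<open>p + q = 1\<close>, so
  \<open>L_n(p,q)\<close> is a rational polynomial in \<open>x = pq\<close>, while \<open>L_n(p,q)^m\<close> is rational. Thus \<open>x\<close> is
  a common root of the rational polynomials \<open>L_n(X)^m - L_n(p,q)^m\<close>. If \<open>x\<close> were irrational,
  it would have a conjugate \<open>z \<noteq> x\<close> that is a common root as well; writing \<open>z = p'q'\<close> with
  \<open>p' + q' = 1\<close> gives \<open>L_n(p',q')^m = L_n(p,q)^m\<close> for all \<open>n\<close>. Expanded binomially, both sides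
  are exponential sums in \<open>n\<close>, and uniqueness of such expansions matches the bases
  \<open>p^j q^(m-j)\<close> with the bases \<open>p'^k q'^(m-k)\<close>, coefficient by coefficient. The binomial
  coefficients \<open>1, 1, m\<close> of \<open>p^m, q^m, p^(m-1) q\<close> then force \<open>p'q' = pq\<close>, a contradiction.
  Hence every \<open>L_n(p,q)\<close> is rational and the first alternative always holds; \<open>\<gamma>\<close> is an
  algebraic integer because \<open>\<gamma>^m = L_2(\<alpha>,\<beta>)^m \<in> \<int>\<close>.\<close>

section \<open>Rational polynomials and conjugates\<close>

abbreviation poly_rat :: "rat poly \<Rightarrow> complex \<Rightarrow> complex" where
  "poly_rat p z \<equiv> poly (map_poly of_rat p) z"

lemma map_poly_of_rat_add [simp]:
  "map_poly (of_rat :: rat \<Rightarrow> 'a :: field_char_0) (p + q) = map_poly of_rat p + map_poly of_rat q"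
  by (intro poly_eqI) (simp add: coeff_map_poly of_rat_add)

lemma map_poly_of_rat_diff [simp]:
  "map_poly (of_rat :: rat \<Rightarrow> 'a :: field_char_0) (p - q) = map_poly of_rat p - map_poly of_rat q"
  by (intro poly_eqI) (simp add: coeff_map_poly of_rat_diff)

lemma map_poly_of_rat_mult [simp]:
  "map_poly (of_rat :: rat \<Rightarrow> 'a :: field_char_0) (p * q) = map_poly of_rat p * map_poly of_rat q"
  by (intro poly_eqI) (simp add: coeff_map_poly coeff_mult of_rat_sum of_rat_mult)

lemma map_poly_of_rat_power [simp]:
  "map_poly (of_rat :: rat \<Rightarrow> 'a :: field_char_0) (p ^ k) = map_poly of_rat p ^ k"
  by (induction k) simp_all

lemma map_poly_of_rat_pderiv:
  "map_poly (of_rat :: rat \<Rightarrow> 'a :: field_char_0) (pderiv p) = pderiv (map_poly of_rat p)"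
  by (intro poly_eqI) (simp add: coeff_map_poly coeff_pderiv of_rat_mult of_rat_add)

lemma map_poly_of_rat_eq_0_iff [simp]:
  "map_poly (of_rat :: rat \<Rightarrow> 'a :: field_char_0) p = 0 \<longleftrightarrow> p = 0"
  by (rule map_poly_eq_0_iff) auto

lemma degree_map_poly_of_rat [simp]:
  "degree (map_poly (of_rat :: rat \<Rightarrow> 'a :: field_char_0) p) = degree p"
  by (rule degree_map_poly) auto

lemma poly_map_poly_of_rat_of_rat [simp]:
  "poly (map_poly (of_rat :: rat \<Rightarrow> 'a :: field_char_0) p) (of_rat q) = of_rat (poly p q)"
  by (induction p) (simp_all add: map_poly_pCons of_rat_add of_rat_mult)

lemma degree_linear_factor_mult:
  fixes G :: "'a :: idom poly"
  assumes "G \<noteq> 0"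
  shows "degree ([:-a, 1:] * G) = degree G + 1"
  by (subst degree_mult_eq) (use assms in auto)

lemma rational_root_of_degree_one_rat_poly:
  assumes "degree F = 1" and "poly_rat F x = 0"
  shows "x \<in> \<rat>"
proof -
  obtain a b where F: "F = [:a, b:]" "b \<noteq> 0"
    using assms(1) degree1_coeffs by blast
  have "of_rat a + x * of_rat b = 0"
    using assms(2) F by (simp add: map_poly_pCons)
  then have "x = of_rat (- a / b)"
    using F(2) by (simp add: of_rat_divide of_rat_minus field_simps eq_neg_iff_add_eq_0 add.commute)
  then show ?thesis by simp
qed

definition is_min_rat_poly :: "complex \<Rightarrow> rat poly \<Rightarrow> bool" where
  "is_min_rat_poly x F \<longleftrightarrow> F \<noteq> 0 \<and> poly_rat F x = 0 \<and>
     (\<forall>G. G \<noteq> 0 \<longrightarrow> poly_rat G x = 0 \<longrightarrow> degree F \<le> degree G)"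

lemma is_min_rat_poly_exists:
  assumes "G \<noteq> 0" and "poly_rat G x = 0"
  obtains F where "is_min_rat_poly x F"
  using ex_has_least_nat[of "\<lambda>F. F \<noteq> 0 \<and> poly_rat F x = 0" G degree] assms
  unfolding is_min_rat_poly_def by blast

lemma is_min_rat_poly_degree_pos:
  assumes "is_min_rat_poly x F"
  shows "degree F > 0"
proof (rule ccontr)
  assume "\<not> degree F > 0"
  then obtain c where "F = [:c:]" using degree0_coeffs by blast
  then show False using assms by (auto simp: is_min_rat_poly_def map_poly_pCons)
qed

lemma is_min_rat_poly_dvd:
  assumes F: "is_min_rat_poly x F" and G: "poly_rat G x = 0"
  shows "F dvd G"
proof (rule ccontr)
  assume "\<not> F dvd G"
  then have nz: "G mod F \<noteq> 0" by (simp add: mod_eq_0_iff_dvd)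
  have eq: "G = F * (G div F) + G mod F" by simp
  have "poly_rat G x = poly_rat F x * poly_rat (G div F) x + poly_rat (G mod F) x"
    by (subst eq) (simp only: map_poly_of_rat_add map_poly_of_rat_mult poly_add poly_mult)
  then have "poly_rat (G mod F) x = 0"
    using F G by (simp add: is_min_rat_poly_def)
  then have "degree F \<le> degree (G mod F)"
    using F nz by (simp add: is_min_rat_poly_def)
  moreover have "degree (G mod F) < degree F"
    using F nz degree_mod_less' by (auto simp: is_min_rat_poly_def)
  ultimately show False by simp
qed

lemma is_min_rat_poly_no_rational_root:
  assumes F: "is_min_rat_poly x F" and "x \<notin> \<rat>" and z: "poly_rat F z = 0"
  shows "z \<notin> \<rat>"
proof
  assume "z \<in> \<rat>"
  then obtain q where q: "z = of_rat q" using \<open>z \<in> \<rat>\<close> by (auto elim: Rats_cases)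
  then have "poly F q = 0" using z by simp
  then obtain G where G: "F = [:-q, 1:] * G" by (metis dvdE poly_eq_0_iff_dvd)
  have "G \<noteq> 0" using G F by (auto simp: is_min_rat_poly_def)
  have "poly_rat F x = poly_rat [:-q, 1:] x * poly_rat G x"
    unfolding G by (simp only: map_poly_of_rat_mult poly_mult)
  also have "poly_rat [:-q, 1:] x = x - z" using q by (simp add: map_poly_pCons of_rat_minus)
  finally have "poly_rat F x = (x - z) * poly_rat G x" .
  moreover have "x \<noteq> z" using \<open>x \<notin> \<rat>\<close> q by auto
  ultimately have "poly_rat G x = 0" using F by (simp add: is_min_rat_poly_def)
  then have "degree F \<le> degree G" using F \<open>G \<noteq> 0\<close> by (simp add: is_min_rat_poly_def)
  moreover have "degree F = degree G + 1"
    by (simp only: G degree_linear_factor_mult[OF \<open>G \<noteq> 0\<close>])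
  ultimately show False by simp
qed

lemma is_min_rat_poly_simple_root:
  assumes F: "is_min_rat_poly x F"
  shows "poly (pderiv (map_poly of_rat F)) x \<noteq> 0"
proof
  assume "poly (pderiv (map_poly of_rat F)) x = 0"
  then have root: "poly_rat (pderiv F) x = 0" by (simp add: map_poly_of_rat_pderiv)
  have "degree F \<noteq> 0" using is_min_rat_poly_degree_pos[OF F] by simp
  then have "pderiv F \<noteq> 0" by (simp add: pderiv_eq_0_iff)
  then have "degree F \<le> degree (pderiv F)" using F root by (simp add: is_min_rat_poly_def)
  with \<open>degree F \<noteq> 0\<close> show False by (simp add: degree_pderiv)
qed

lemma is_min_rat_poly_second_root:
  assumes F: "is_min_rat_poly x F" and "degree F \<ge> 2"
  obtains z where "z \<noteq> x" and "poly_rat F z = 0"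
proof -
  let ?F = "map_poly (of_rat :: rat \<Rightarrow> complex) F"
  obtain G where G: "?F = [:-x, 1:] * G"
    using F by (metis dvdE poly_eq_0_iff_dvd is_min_rat_poly_def)
  have "G \<noteq> 0" using G F by (auto simp: is_min_rat_poly_def)
  then have "degree ?F = degree G + 1" unfolding G by (rule degree_linear_factor_mult)
  then have "degree G \<ge> 1" using \<open>degree F \<ge> 2\<close> by (simp add: degree_map_poly)
  then obtain y where y: "poly G y = 0"
    using fundamental_theorem_of_algebra_alt[of G] by fastforce
  show ?thesis
  proof (cases "y = x")
    case True
    then obtain K where K: "G = [:-x, 1:] * K" using y by (metis dvdE poly_eq_0_iff_dvd)
    have "poly (pderiv ?F) x = 0" unfolding G K pderiv_mult poly_add poly_mult by simp
    with is_min_rat_poly_simple_root[OF F] show ?thesis by contradiction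
  next
    case False
    then show ?thesis using that[of y] G y by simp
  qed
qed

lemma irrational_algebraic_conjugate:
  assumes "G \<noteq> 0" and "poly_rat G x = 0" and "x \<notin> \<rat>"
  obtains z where "z \<noteq> x" and "z \<notin> \<rat>" and "\<And>H. poly_rat H x = 0 \<Longrightarrow> poly_rat H z = 0"
proof -
  obtain F where F: "is_min_rat_poly x F" using is_min_rat_poly_exists assms(1,2) by blast
  have "degree F \<noteq> 0" using is_min_rat_poly_degree_pos[OF F] by simp
  moreover have "degree F \<noteq> 1"
    using F assms(3) rational_root_of_degree_one_rat_poly by (auto simp: is_min_rat_poly_def)
  ultimately obtain z where z: "z \<noteq> x" "poly_rat F z = 0"
    using is_min_rat_poly_second_root[OF F] by force
  have "poly_rat H z = 0" if H: "poly_rat H x = 0" for H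
  proof -
    obtain K where "H = F * K" using is_min_rat_poly_dvd[OF F H] by blast
    then show ?thesis using z(2) by simp
  qed
  moreover have "z \<notin> \<rat>" by (rule is_min_rat_poly_no_rational_root[OF F assms(3) z(2)])
  ultimately show ?thesis using that z(1) by blast
qed

section \<open>Exponential sums\<close>

definition root_of_unity :: "'a :: monoid_mult \<Rightarrow> bool" where
  "root_of_unity z \<longleftrightarrow> (\<exists>k::nat. k > 0 \<and> z ^ k = 1)"

lemma power_inj_if_not_root_of_unity:
  fixes z :: "'a :: idom"
  assumes "z \<noteq> 0" and "\<not> root_of_unity z" and "z ^ i = z ^ j"
  shows "i = j"
proof -
  have False if "i' < j'" and "z ^ i' = z ^ j'" for i' j'
  proof -
    have "z ^ j' = z ^ i' * z ^ (j' - i')" using that(1) by (simp flip: power_add)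
    then have "z ^ (j' - i') = 1" using that(2) assms(1) by simp
    then show False using assms(2) that(1) unfolding root_of_unity_def by (meson zero_less_diff)
  qed
  then show ?thesis using assms(3) by (metis linorder_neqE_nat)
qed

lemma inj_on_power_products:
  fixes p q :: "'a :: field"
  assumes "p \<noteq> 0" and "q \<noteq> 0" and "\<not> root_of_unity (p / q)"
  shows "inj_on (\<lambda>j. p ^ j * q ^ (m - j)) {..m}"
proof (rule inj_onI)
  fix i j assume ij: "i \<in> {..m}" "j \<in> {..m}" "p ^ i * q ^ (m - i) = p ^ j * q ^ (m - j)"
  have eq: "p ^ k * q ^ (m - k) = (p / q) ^ k * q ^ m" if "k \<le> m" for k
  proof -
    have "q ^ m = q ^ k * q ^ (m - k)" using that by (simp flip: power_add)
    then show ?thesis using assms(2) by (simp add: power_divide)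
  qed
  have "(p / q) ^ i = (p / q) ^ j" using ij eq[of i] eq[of j] assms(2) by simp
  then show "i = j" by (rule power_inj_if_not_root_of_unity[rotated 2]) (use assms in auto)
qed

lemma sum_powers_eq_0_imp_coeff_eq_0:
  fixes c :: "'a :: idom \<Rightarrow> 'a"
  assumes "finite R" and "\<And>n. (\<Sum>r\<in>R. c r * r ^ n) = 0" and "s \<in> R"
  shows "c s = 0"
  using assms
proof (induction R arbitrary: c s rule: finite_induct)
  case empty
  then show ?case by simp
next
  case (insert t R)
  have sum_t: "(\<Sum>r\<in>R. c r * r ^ n) = - (c t * t ^ n)" for n
    using insert.prems(1)[of n] insert.hyps by (simp add: eq_neg_iff_add_eq_0 add.commute)
  \<comment> \<open>Multiplying by \<open>r - t\<close> removes the base \<open>t\<close>, so induction applies to the remaining bases.\<close>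
  have "(\<Sum>r\<in>R. (c r * (r - t)) * r ^ n) = 0" for n
  proof -
    have "(\<Sum>r\<in>R. (c r * (r - t)) * r ^ n) = (\<Sum>r\<in>R. c r * r ^ Suc n) - t * (\<Sum>r\<in>R. c r * r ^ n)"
      by (simp add: sum_distrib_left sum_subtractf[symmetric] algebra_simps)
    also have "\<dots> = - (c t * t ^ Suc n) + t * (c t * t ^ n)"
      by (simp only: sum_t diff_minus_eq_add mult_minus_right)
    finally show ?thesis by simp
  qed
  then have "c r * (r - t) = 0" if "r \<in> R" for r
    using insert.IH[of "\<lambda>r. c r * (r - t)" r] that by simp
  then have rest: "c r = 0" if "r \<in> R" for r
    using that insert.hyps(2) by fastforce
  then have "c t = 0" using sum_t[of 0] by simp
  then show ?case using insert.prems(2) rest by auto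
qed

lemma exponential_sums_eq_imp_term_match:
  fixes A B \<rho> \<sigma> :: "nat \<Rightarrow> 'a :: idom"
  assumes "inj_on \<sigma> {..m}" and "inj_on \<rho> {..m}"
    and eq: "\<And>n. (\<Sum>j\<le>m. A j * \<rho> j ^ n) = (\<Sum>k\<le>m. B k * \<sigma> k ^ n)"
    and "j \<le> m" and "A j \<noteq> 0"
  shows "\<exists>k\<le>m. \<sigma> k = \<rho> j \<and> B k = A j"
proof -
  define R where "R = \<rho> ` {..m} \<union> \<sigma> ` {..m}"
  define c where "c r = (\<Sum>i | i \<le> m \<and> \<rho> i = r. A i) - (\<Sum>i | i \<le> m \<and> \<sigma> i = r. B i)" for r
  have "finite R" by (simp add: R_def)
  have "(\<Sum>r\<in>R. c r * r ^ n) = 0" for n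
  proof -
    have grp: "(\<Sum>r\<in>R. \<Sum>i | i \<le> m \<and> \<tau> i = r. C i * \<tau> i ^ n) = (\<Sum>i\<le>m. C i * \<tau> i ^ n)"
      if "\<tau> ` {..m} \<subseteq> R" for C \<tau> :: "nat \<Rightarrow> 'a"
      using sum.group[of "{..m}" R \<tau> "\<lambda>i. C i * \<tau> i ^ n"] that \<open>finite R\<close> by simp
    have "(\<Sum>r\<in>R. c r * r ^ n) = (\<Sum>r\<in>R. \<Sum>i | i \<le> m \<and> \<rho> i = r. A i * \<rho> i ^ n)
        - (\<Sum>r\<in>R. \<Sum>i | i \<le> m \<and> \<sigma> i = r. B i * \<sigma> i ^ n)"
      unfolding c_def sum_subtractf[symmetric] left_diff_distrib sum_distrib_right
      by (intro sum.cong refl arg_cong2[where f="(-)"]) auto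
    also have "\<dots> = (\<Sum>j\<le>m. A j * \<rho> j ^ n) - (\<Sum>k\<le>m. B k * \<sigma> k ^ n)"
      by (intro arg_cong2[where f="(-)"] grp) (auto simp: R_def)
    also have "\<dots> = 0" using eq[of n] by simp
    finally show ?thesis .
  qed
  then have c0: "c (\<rho> j) = 0"
    using sum_powers_eq_0_imp_coeff_eq_0[OF \<open>finite R\<close>] \<open>j \<le> m\<close> by (auto simp: R_def)
  have "{i. i \<le> m \<and> \<rho> i = \<rho> j} = {j}"
    using assms(2,4) by (auto dest: inj_onD)
  then have cA: "c (\<rho> j) = A j - (\<Sum>i | i \<le> m \<and> \<sigma> i = \<rho> j. B i)" by (simp add: c_def)
  show ?thesis
  proof (cases "\<exists>k\<le>m. \<sigma> k = \<rho> j")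
    case True
    then obtain k where k: "k \<le> m" "\<sigma> k = \<rho> j" by blast
    then have "{i. i \<le> m \<and> \<sigma> i = \<rho> j} = {k}" using assms(1) unfolding inj_on_def by auto
    then show ?thesis using c0 cA k by auto
  next
    case False
    then have none: "{i. i \<le> m \<and> \<sigma> i = \<rho> j} = {}" by auto
    have "c (\<rho> j) = A j" using cA unfolding none by simp
    then show ?thesis using c0 \<open>A j \<noteq> 0\<close> by simp
  qed
qed

section \<open>Powers of Lucas sequences\<close>

lemma binomial_ge_self:
  assumes "0 < k" and "k < n"
  shows "n \<le> n choose k"
proof (cases "2 * k \<le> n")
  case True
  have "n choose 1 \<le> n choose k" by (rule binomial_mono) (use assms True in auto)
  then show ?thesis by simp
next
  case False
  have "n choose 1 \<le> n choose (n - k)" by (rule binomial_mono) (use assms False in auto)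
  then show ?thesis using binomial_symmetric[of k n] assms by simp
qed

lemma binomial_gt_self:
  assumes "2 \<le> k" and "k + 2 \<le> n"
  shows "n < n choose k"
proof -
  have "n choose 2 \<le> n choose k"
  proof (cases "2 * k \<le> n")
    case True
    show ?thesis by (rule binomial_mono) (use assms True in auto)
  next
    case False
    have "n choose 2 \<le> n choose (n - k)" by (rule binomial_mono) (use assms False in auto)
    then show ?thesis using binomial_symmetric[of k n] assms by simp
  qed
  moreover have "n * 3 \<le> n * (n - 1)" by (rule mult_left_mono) (use assms in auto)
  then have "2 * n + 2 \<le> n * (n - 1)" using assms by linarith
  then have "Suc n \<le> n choose 2" by (simp add: choose_two less_eq_div_iff_mult_less_eq)
  ultimately show ?thesis by linarith
qed

lemma binomial_eq_1_imp:
  assumes "k \<le> n" and "n choose k = 1"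
  shows "k = 0 \<or> k = n"
  using binomial_ge_self[of k n] assms by (cases "k = 0 \<or> k = n") auto

lemma binomial_eq_self_imp:
  assumes "2 \<le> n" and "k \<le> n" and "n choose k = n"
  shows "k = 1 \<or> k = n - 1"
proof (rule ccontr)
  assume "\<not> (k = 1 \<or> k = n - 1)"
  moreover have "k \<noteq> 0" and "k \<noteq> n" using assms by (auto intro!: Nat.gr0I)
  ultimately have "2 \<le> k" and "k + 2 \<le> n" using assms(2) by auto
  from binomial_gt_self[OF this] assms(3) show False by simp
qed

definition nondegenerate_pair :: "complex \<Rightarrow> complex \<Rightarrow> bool" where
  "nondegenerate_pair x y \<longleftrightarrow> x \<noteq> 0 \<and> y \<noteq> 0 \<and> \<not> root_of_unity (x / y)"

lemma nondegenerate_pair_power_neq: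
  assumes "nondegenerate_pair x y" and "k > 0"
  shows "x ^ k \<noteq> y ^ k"
proof
  assume "x ^ k = y ^ k"
  then have "(x / y) ^ k = 1" using assms(1) by (simp add: nondegenerate_pair_def power_divide)
  then show False using assms unfolding nondegenerate_pair_def root_of_unity_def by blast
qed

lemma nondegenerate_pair_neq:
  assumes "nondegenerate_pair x y"
  shows "x \<noteq> y"
  using nondegenerate_pair_power_neq[OF assms, of 1] by simp

lemma nondegenerate_pair_sum_neq_0:
  assumes "nondegenerate_pair x y"
  shows "x + y \<noteq> 0"
proof
  assume "x + y = 0"
  then have "x ^ 2 = y ^ 2" by (simp add: eq_neg_iff_add_eq_0[symmetric])
  then show False using nondegenerate_pair_power_neq[OF assms, of 2] by simp
qed

lemma nondegenerate_pair_div_iff: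
  assumes "c \<noteq> 0"
  shows "nondegenerate_pair (x / c) (y / c) \<longleftrightarrow> nondegenerate_pair x y"
  using assms by (simp add: nondegenerate_pair_def)

lemma lucas_0 [simp]: "lucas x y 0 = 0"
  by (simp add: lucas_def)

lemma lucas_1: "x \<noteq> y \<Longrightarrow> lucas x y 1 = 1"
  by (simp add: lucas_def)

lemma lucas_2: "x \<noteq> y \<Longrightarrow> lucas x y 2 = x + y"
  by (simp add: lucas_def power2_eq_square field_simps)

lemma lucas_rec:
  assumes "x \<noteq> y"
  shows "lucas x y (Suc (Suc n)) = (x + y) * lucas x y (Suc n) - x * y * lucas x y n"
proof -
  have "x ^ Suc (Suc n) - y ^ Suc (Suc n) = (x + y) * (x ^ Suc n - y ^ Suc n) - x * y * (x ^ n - y ^ n)"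
    by (simp add: algebra_simps)
  then show ?thesis
    unfolding lucas_def by (simp only: diff_divide_distrib[symmetric] times_divide_eq_right)
qed

lemma lucas_scale:
  assumes "c \<noteq> 0"
  shows "lucas (c * x) (c * y) (Suc n) = c ^ n * lucas x y (Suc n)"
proof -
  have "(c * x) ^ Suc n - (c * y) ^ Suc n = c * c ^ n * (x ^ Suc n - y ^ Suc n)"
    by (simp add: power_mult_distrib algebra_simps)
  moreover have "c * x - c * y = c * (x - y)" by (simp add: right_diff_distrib)
  ultimately show ?thesis using assms by (simp add: lucas_def)
qed

lemma lucas_power_div_rational:
  assumes "c \<noteq> 0" and "c ^ m \<in> \<rat>" and "lucas x y n ^ m \<in> \<rat>"
  shows "lucas (x / c) (y / c) n ^ m \<in> \<rat>"
proof (cases n)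
  case 0
  then show ?thesis by (simp add: power_0_left)
next
  case (Suc k)
  have "lucas x y n = c ^ k * lucas (x / c) (y / c) n"
    using lucas_scale[OF assms(1), of "x / c" "y / c" k] assms(1) Suc by simp
  then have "lucas (x / c) (y / c) n ^ m = lucas x y n ^ m / (c ^ m) ^ k"
    using assms(1) by (simp add: power_mult_distrib flip: power_mult) (simp add: mult.commute)
  then show ?thesis using assms(2,3) by simp
qed

lemma lucas_nonzero:
  assumes "nondegenerate_pair x y" and "n > 0"
  shows "lucas x y n \<noteq> 0"
  using nondegenerate_pair_power_neq[OF assms] nondegenerate_pair_neq[OF assms(1)]
  by (simp add: lucas_def)

definition lucas_coeff :: "nat \<Rightarrow> complex \<Rightarrow> complex \<Rightarrow> nat \<Rightarrow> complex" where
  "lucas_coeff m x y j = of_nat (m choose j) * (- 1) ^ (m - j) / (x - y) ^ m"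

lemma norm_lucas_coeff: "cmod (lucas_coeff m x y j) = real (m choose j) / cmod (x - y) ^ m"
  by (simp add: lucas_coeff_def norm_divide norm_mult norm_power)

lemma lucas_power_expansion:
  "lucas x y n ^ m = (\<Sum>j\<le>m. lucas_coeff m x y j * (x ^ j * y ^ (m - j)) ^ n)"
proof -
  have "lucas x y n ^ m = (x ^ n + - (y ^ n)) ^ m / (x - y) ^ m"
    by (simp add: lucas_def power_divide)
  also have "(x ^ n + - (y ^ n)) ^ m = (\<Sum>j\<le>m. of_nat (m choose j) * (x ^ n) ^ j * (- (y ^ n)) ^ (m - j))"
    by (rule binomial_ring)
  also have "\<dots> / (x - y) ^ m = (\<Sum>j\<le>m. lucas_coeff m x y j * (x ^ j * y ^ (m - j)) ^ n)"
    unfolding sum_divide_distrib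
  proof (intro sum.cong refl)
    fix j
    have "(x ^ n) ^ j * (- (y ^ n)) ^ (m - j) = (- 1) ^ (m - j) * (x ^ j * y ^ (m - j)) ^ n"
      by (simp add: power_mult_distrib power_minus[of "y ^ n"] flip: power_mult) (simp add: mult.commute)
    then show "of_nat (m choose j) * (x ^ n) ^ j * (- (y ^ n)) ^ (m - j) / (x - y) ^ m
        = lucas_coeff m x y j * (x ^ j * y ^ (m - j)) ^ n"
      by (simp add: lucas_coeff_def field_simps)
  qed
  finally show ?thesis .
qed

context
  fixes a b p q :: complex and m :: nat
  assumes ab: "nondegenerate_pair a b" and pq: "nondegenerate_pair p q"
    and lucas_power_eq: "\<And>n. lucas a b n ^ m = lucas p q n ^ m"
begin

lemma lucas_power_eq_term_match:
  assumes "j \<le> m"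
  shows "\<exists>k\<le>m. a ^ k * b ^ (m - k) = p ^ j * q ^ (m - j) \<and> lucas_coeff m a b k = lucas_coeff m p q j"
proof (rule exponential_sums_eq_imp_term_match)
  show "inj_on (\<lambda>k. a ^ k * b ^ (m - k)) {..m}" "inj_on (\<lambda>j. p ^ j * q ^ (m - j)) {..m}"
    using ab pq by (auto simp: nondegenerate_pair_def intro: inj_on_power_products)
  show "(\<Sum>j\<le>m. lucas_coeff m p q j * (p ^ j * q ^ (m - j)) ^ n)
      = (\<Sum>k\<le>m. lucas_coeff m a b k * (a ^ k * b ^ (m - k)) ^ n)" for n
    using lucas_power_eq[of n] by (simp add: lucas_power_expansion)
  show "lucas_coeff m p q j \<noteq> 0"
    using assms nondegenerate_pair_neq[OF pq] by (simp add: lucas_coeff_def)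
qed (use assms in simp)

\<comment> \<open>The largest coefficient, at \<open>m div 2\<close>, must reappear on the other side.\<close>
lemma lucas_power_eq_norm_diff_le: "cmod (a - b) ^ m \<le> cmod (p - q) ^ m"
proof -
  define j where "j = m div 2"
  obtain k where "k \<le> m" and "lucas_coeff m a b k = lucas_coeff m p q j"
    using lucas_power_eq_term_match[of j] by (auto simp: j_def)
  then have eq: "real (m choose k) / cmod (a - b) ^ m = real (m choose j) / cmod (p - q) ^ m"
    by (metis norm_lucas_coeff)
  have "m choose k \<le> m choose j" unfolding j_def by (rule binomial_maximum)
  then have "real (m choose j) / cmod (p - q) ^ m \<le> real (m choose j) / cmod (a - b) ^ m"
    unfolding eq[symmetric] by (simp add: divide_right_mono)
  moreover have "real (m choose j) > 0" by (simp add: j_def)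
  moreover have "cmod (a - b) ^ m > 0" "cmod (p - q) ^ m > 0"
    using nondegenerate_pair_neq[OF ab] nondegenerate_pair_neq[OF pq] by auto
  ultimately show ?thesis by (simp add: frac_le_eq field_simps)
qed

end

lemma lucas_power_eq_binomial_match:
  assumes ab: "nondegenerate_pair a b" and pq: "nondegenerate_pair p q"
    and eq: "\<And>n. lucas a b n ^ m = lucas p q n ^ m" and "j \<le> m"
  shows "\<exists>k\<le>m. a ^ k * b ^ (m - k) = p ^ j * q ^ (m - j) \<and> m choose k = m choose j"
proof -
  have norm_eq: "cmod (a - b) ^ m = cmod (p - q) ^ m"
    using lucas_power_eq_norm_diff_le[OF ab pq eq] lucas_power_eq_norm_diff_le[OF pq ab eq[symmetric]]
    by simp
  obtain k where k: "k \<le> m" "a ^ k * b ^ (m - k) = p ^ j * q ^ (m - j)"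
    and "lucas_coeff m a b k = lucas_coeff m p q j"
    using lucas_power_eq_term_match[OF ab pq eq \<open>j \<le> m\<close>] by blast
  then have "real (m choose k) / cmod (p - q) ^ m = real (m choose j) / cmod (p - q) ^ m"
    using norm_eq by (metis norm_lucas_coeff)
  moreover have "cmod (p - q) ^ m \<noteq> 0" using nondegenerate_pair_neq[OF pq] by simp
  ultimately have "m choose k = m choose j" by (simp only: divide_cancel_right of_nat_eq_iff simp_thms)
  then show ?thesis using k by blast
qed

lemma sum_one_prod_eq_if_power_terms_eq:
  fixes a b p q :: complex
  assumes "a + b = 1" and "p + q = 1" and pq: "nondegenerate_pair p q" and "m \<ge> 2"
    and am: "a ^ m = p ^ m" and bm: "b ^ m = q ^ m"
    and mixed: "a ^ (m - 1) * b = p ^ (m - 1) * q \<or> a * b ^ (m - 1) = p ^ (m - 1) * q"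
  shows "a * b = p * q"
  using mixed
proof
  assume mixed: "a ^ (m - 1) * b = p ^ (m - 1) * q"
  have "m > 0" using \<open>m \<ge> 2\<close> by simp
  have p0: "p \<noteq> 0" using pq by (simp add: nondegenerate_pair_def)
  have "p ^ (m - 1) * (p * b) = p ^ m * b"
    using power_minus_mult[OF \<open>m > 0\<close>, of p] by (simp add: ac_simps)
  also have "\<dots> = a * (a ^ (m - 1) * b)"
    using am power_minus_mult[OF \<open>m > 0\<close>, of a] by (simp add: ac_simps)
  also have "\<dots> = p ^ (m - 1) * (a * q)" using mixed by (simp add: ac_simps)
  finally have "p * b = a * q" using p0 by simp
  then have "p * (1 - a) = a * (1 - p)"
    using assms(1,2) by (metis add_diff_cancel_left')
  then have "p = a" by (simp add: algebra_simps)
  then show ?thesis using assms(1,2) by (metis add_left_cancel)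
next
  assume mixed: "a * b ^ (m - 1) = p ^ (m - 1) * q"
  show ?thesis
  proof (cases "m = 2")
    case True
    then show ?thesis using mixed by simp
  next
    case False
    \<comment> \<open>Raising \<open>mixed\<close> to the \<open>m\<close>-th power and using \<open>am\<close>, \<open>bm\<close> gives \<open>p^(m(m-2)) = q^(m(m-2))\<close>.\<close>
    have p0: "p \<noteq> 0" and q0: "q \<noteq> 0" using pq by (auto simp: nondegenerate_pair_def)
    have "p ^ m * (q ^ m) ^ (m - 1) = (p ^ m) ^ (m - 1) * q ^ m"
    proof -
      have "(a * b ^ (m - 1)) ^ m = a ^ m * (b ^ m) ^ (m - 1)"
        by (simp add: power_mult_distrib ac_simps flip: power_mult)
      moreover have "(p ^ (m - 1) * q) ^ m = (p ^ m) ^ (m - 1) * q ^ m"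
        by (simp add: power_mult_distrib ac_simps flip: power_mult)
      ultimately show ?thesis using mixed am bm by simp
    qed
    moreover have "m - 1 = Suc (m - 2)" using \<open>m \<ge> 2\<close> False by simp
    ultimately have "(q ^ m) ^ (m - 2) = (p ^ m) ^ (m - 2)" using p0 q0 by simp
    moreover have "m * (m - 2) > 0" using \<open>m \<ge> 2\<close> False by simp
    ultimately show ?thesis using nondegenerate_pair_power_neq[OF pq] by (metis power_mult)
  qed
qed

\<comment> \<open>Compare the terms with bases \<open>p^m\<close>, \<open>q^m\<close> and \<open>p^(m-1) q\<close>: their binomial coefficients
  \<open>1\<close>, \<open>1\<close>, \<open>m\<close> pin down which bases \<open>a^k b^(m-k)\<close> they coincide with.\<close>
lemma lucas_power_eq_imp_prod_eq:
  assumes "a + b = 1" and "p + q = 1" and ab: "nondegenerate_pair a b" and pq: "nondegenerate_pair p q"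
    and "m \<ge> 2" and eq: "\<And>n. lucas a b n ^ m = lucas p q n ^ m"
  shows "a * b = p * q"
proof -
  obtain k1 where k1: "k1 \<le> m" "a ^ k1 * b ^ (m - k1) = p ^ m" "m choose k1 = 1"
    using lucas_power_eq_binomial_match[OF ab pq eq, of m] by auto
  obtain k0 where k0: "k0 \<le> m" "a ^ k0 * b ^ (m - k0) = q ^ m" "m choose k0 = 1"
    using lucas_power_eq_binomial_match[OF ab pq eq, of 0] by auto
  obtain k2 where k2: "k2 \<le> m" "a ^ k2 * b ^ (m - k2) = p ^ (m - 1) * q" "m choose k2 = m"
    using lucas_power_eq_binomial_match[OF ab pq eq, of "m - 1"] binomial_symmetric[of 1 m] \<open>m \<ge> 2\<close>
    by auto
  have k1_cases: "k1 = 0 \<or> k1 = m" and k0_cases: "k0 = 0 \<or> k0 = m"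
    using binomial_eq_1_imp k0 k1 by blast+
  have k2_cases: "k2 = 1 \<or> k2 = m - 1"
    using binomial_eq_self_imp[OF \<open>m \<ge> 2\<close>] k2 by blast
  have "p ^ m \<noteq> q ^ m" using nondegenerate_pair_power_neq[OF pq] \<open>m \<ge> 2\<close> by simp
  then have "k1 \<noteq> k0" using k0 k1 by auto
  have mixed: "a ^ (m - 1) * b = p ^ (m - 1) * q \<or> a * b ^ (m - 1) = p ^ (m - 1) * q"
    using k2 k2_cases \<open>m \<ge> 2\<close> by auto
  show ?thesis
  proof (cases "k1 = m")
    case True
    then have "k0 = 0" using k0_cases \<open>k1 \<noteq> k0\<close> by auto
    then have "a ^ m = p ^ m" "b ^ m = q ^ m" using k0 k1 \<open>k1 = m\<close> by auto
    then show ?thesis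
      using sum_one_prod_eq_if_power_terms_eq[OF assms(1,2) pq \<open>m \<ge> 2\<close>] mixed by blast
  next
    case False
    then have "k1 = 0" "k0 = m" using k0_cases k1_cases \<open>k1 \<noteq> k0\<close> by auto
    then have "b ^ m = p ^ m" "a ^ m = q ^ m" using k0 k1 by auto
    moreover have "b + a = 1" using assms(1) by (simp add: add.commute)
    ultimately have "b * a = p * q"
      using sum_one_prod_eq_if_power_terms_eq[OF _ assms(2) pq \<open>m \<ge> 2\<close>] mixed by (metis mult.commute)
    then show ?thesis by (simp add: mult.commute)
  qed
qed

section \<open>Lucas polynomials\<close>

fun lucas_poly :: "nat \<Rightarrow> rat poly" where
  "lucas_poly 0 = 0"
| "lucas_poly (Suc 0) = 1"
| "lucas_poly (Suc (Suc n)) = lucas_poly (Suc n) - [:0, 1:] * lucas_poly n"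

lemma poly_lucas_poly:
  assumes "a + b = 1" and "a \<noteq> b"
  shows "poly_rat (lucas_poly n) (a * b) = lucas a b n"
proof (induction n rule: lucas_poly.induct)
  case 1
  then show ?case by simp
next
  case 2
  then show ?case using lucas_1[OF assms(2)] by simp
next
  case (3 n)
  then show ?case using lucas_rec[OF assms(2), of n] assms(1) by (simp add: map_poly_pCons)
qed

lemma lucas_rational_if_prod_rational:
  assumes "a + b = 1" and "a \<noteq> b" and "a * b \<in> \<rat>"
  shows "lucas a b n \<in> \<rat>"
proof -
  obtain r where "a * b = of_rat r" using assms(3) by (auto elim: Rats_cases)
  then have "lucas a b n = of_rat (poly (lucas_poly n) r)"
    using poly_lucas_poly[OF assms(1,2), of n] by simp
  then show ?thesis by simp
qed

lemma sum_one_pair_exists: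
  fixes z :: complex
  obtains a b where "a + b = 1" and "a * b = z" and "(a - b) ^ 2 = 1 - 4 * z"
proof
  let ?d = "csqrt (1 - 4 * z)"
  show "(1 + ?d) / 2 + (1 - ?d) / 2 = 1" by (simp add: field_simps)
  show "(1 + ?d) / 2 * ((1 - ?d) / 2) = z"
    by (simp add: field_simps power2_eq_square[symmetric])
  show "((1 + ?d) / 2 - (1 - ?d) / 2) ^ 2 = 1 - 4 * z"
    by (simp add: field_simps)
qed

lemma nondegenerate_pair_if_lucas_power_eq:
  assumes pq: "nondegenerate_pair p q" and "a \<noteq> 0" and "b \<noteq> 0" and "m > 0"
    and eq: "\<And>n. lucas a b n ^ m = lucas p q n ^ m"
  shows "nondegenerate_pair a b"
  unfolding nondegenerate_pair_def root_of_unity_def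
proof (intro assms(2,3) conjI notI)
  assume "\<exists>k::nat. k > 0 \<and> (a / b) ^ k = 1"
  then obtain k :: nat where "k > 0" and "a ^ k = b ^ k" using \<open>b \<noteq> 0\<close> by (auto simp: power_divide)
  then have "lucas a b k = 0" by (simp add: lucas_def)
  then have "lucas p q k ^ m = 0" using eq[of k] \<open>m > 0\<close> by (simp add: zero_power)
  then show False using lucas_nonzero[OF pq \<open>k > 0\<close>] by simp
qed

lemma lucas_poly_power_root_eq_prod:
  assumes "a + b = 1" and ab: "nondegenerate_pair a b" and "m \<ge> 2"
    and "z \<noteq> 0" and "4 * z \<noteq> 1"
    and root: "\<And>n. poly_rat (lucas_poly n) z ^ m = lucas a b n ^ m"
  shows "z = a * b"
proof -
  obtain a' b' where ab': "a' + b' = 1" "a' * b' = z" "(a' - b') ^ 2 = 1 - 4 * z"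
    using sum_one_pair_exists by blast
  have "a' \<noteq> b'" using ab'(3) \<open>4 * z \<noteq> 1\<close> by auto
  then have eq: "lucas a' b' n ^ m = lucas a b n ^ m" for n
    using root[of n] poly_lucas_poly[OF ab'(1)] ab'(2) by simp
  have "nondegenerate_pair a' b'"
    using nondegenerate_pair_if_lucas_power_eq[OF ab _ _ _ eq] ab'(2) \<open>z \<noteq> 0\<close> \<open>m \<ge> 2\<close> by auto
  then show ?thesis
    using lucas_power_eq_imp_prod_eq[OF ab'(1) assms(1) _ ab \<open>m \<ge> 2\<close> eq] ab'(2) by simp
qed

lemma prod_rational_if_lucas_powers_rational:
  assumes "a + b = 1" and ab: "nondegenerate_pair a b" and "m \<ge> 2"
    and rat: "\<And>n. lucas a b n ^ m \<in> \<rat>"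
  shows "a * b \<in> \<rat>"
proof (rule ccontr)
  assume irr: "a * b \<notin> \<rat>"
  have "\<forall>n. \<exists>r. of_rat r = lucas a b n ^ m" using rat by (metis Rats_cases)
  then obtain c where c: "\<And>n. of_rat (c n) = lucas a b n ^ m" by metis
  define H where "H n = lucas_poly n ^ m - [:c n:]" for n
  have poly_H: "poly_rat (H n) z = poly_rat (lucas_poly n) z ^ m - lucas a b n ^ m" for n z
    by (simp add: H_def map_poly_pCons c)
  have H_root: "poly_rat (H n) (a * b) = 0" for n
    using poly_H poly_lucas_poly[OF assms(1) nondegenerate_pair_neq[OF ab]] by simp
  \<comment> \<open>\<open>H 1 = H 2 = 0\<close>, but \<open>lucas_poly 3 = 1 - X\<close> vanishes at \<open>1\<close>.\<close>
  have "poly_rat (H 3) 1 = - (lucas a b 3 ^ m)"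
    using \<open>m \<ge> 2\<close> by (simp add: poly_H numeral_3_eq_3 map_poly_pCons power_0_left)
  then have "H 3 \<noteq> 0" using lucas_nonzero[OF ab, of 3] by auto
  then obtain z where "z \<noteq> a * b" and "z \<notin> \<rat>" and conj: "\<And>G. poly_rat G (a * b) = 0 \<Longrightarrow> poly_rat G z = 0"
    using irrational_algebraic_conjugate[OF _ H_root irr] by blast
  moreover have "z \<noteq> 0" using \<open>z \<notin> \<rat>\<close> by auto
  moreover have "4 * z \<noteq> 1"
  proof
    assume "4 * z = 1"
    then have "z = of_rat (1 / 4)" by (simp add: of_rat_divide field_simps)
    then show False using \<open>z \<notin> \<rat>\<close> by simp
  qed
  moreover have "poly_rat (lucas_poly n) z ^ m = lucas a b n ^ m" for n
    using conj[OF H_root, of n] poly_H by simp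
  ultimately show False
    using lucas_poly_power_root_eq_prod[OF assms(1) ab \<open>m \<ge> 2\<close>] by blast
qed

lemma algebraic_int_if_power_in_Ints:
  fixes x :: "'a :: field_char_0"
  assumes "m > 0" and "x ^ m \<in> \<int>"
  shows "algebraic_int x"
proof -
  obtain k where k: "x ^ m = of_int k" using assms(2) by (auto elim: Ints_cases)
  show ?thesis
  proof (rule algebraic_int_root[of "of_int k" "monom 1 m"])
    show "poly (monom 1 m) x = of_int k" using k by (simp add: poly_monom)
  qed (use assms(1) in \<open>auto simp: coeff_monom degree_monom_eq\<close>)
qed

theorem lemma6:
  fixes \<alpha> \<beta> :: complex and m :: nat
  assumes "algebraic_int \<alpha>" and "algebraic_int \<beta>"
    and "\<alpha> \<noteq> 0" and "\<beta> \<noteq> 0"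
    and "\<not> (\<exists>k::nat. k > 0 \<and> (\<alpha> / \<beta>) ^ k = 1)"
    and "m \<ge> 2"
    and "\<forall>n::nat. (lucas \<alpha> \<beta> n) ^ m \<in> \<int>"
  shows "\<exists>\<gamma> \<alpha>' \<beta>'. algebraic_int \<gamma> \<and> \<gamma> ^ m \<in> \<rat> \<and> \<alpha> = \<gamma> * \<alpha>' \<and> \<beta> = \<gamma> * \<beta>' \<and>
           ((\<forall>n::nat. lucas \<alpha>' \<beta>' n \<in> \<rat>) \<or>
            (even m \<and> (\<exists>r s :: int. coprime r s \<and>
                 \<alpha>' = csqrt (of_int r) + csqrt (of_int s) \<and>
                 \<beta>' = csqrt (of_int r) - csqrt (of_int s) \<and>
                 (\<forall>n::nat. (lucas \<alpha>' \<beta>' n) ^ 2 \<in> \<rat>))))"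
proof -
  have nondeg: "nondegenerate_pair \<alpha> \<beta>"
    using assms(3-5) by (simp add: nondegenerate_pair_def root_of_unity_def)
  define \<gamma> where "\<gamma> = \<alpha> + \<beta>"
  have "\<gamma> \<noteq> 0" using nondegenerate_pair_sum_neq_0[OF nondeg] by (simp add: \<gamma>_def)
  have "\<gamma> ^ m \<in> \<int>"
    using assms(7) lucas_2[OF nondegenerate_pair_neq[OF nondeg]] by (metis \<gamma>_def)
  define p q where "p = \<alpha> / \<gamma>" and "q = \<beta> / \<gamma>"
  have "p + q = 1" using \<open>\<gamma> \<noteq> 0\<close> by (simp add: p_def q_def \<gamma>_def add_divide_distrib[symmetric])
  have pq: "nondegenerate_pair p q"
    using nondeg nondegenerate_pair_div_iff[OF \<open>\<gamma> \<noteq> 0\<close>] by (simp add: p_def q_def)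
  have "lucas p q n ^ m \<in> \<rat>" for n
    unfolding p_def q_def using \<open>\<gamma> \<noteq> 0\<close> \<open>\<gamma> ^ m \<in> \<int>\<close> assms(7)
    by (intro lucas_power_div_rational) (auto intro: subsetD[OF Ints_subset_Rats])
  then have "p * q \<in> \<rat>"
    using prod_rational_if_lucas_powers_rational[OF \<open>p + q = 1\<close> pq \<open>m \<ge> 2\<close>] by blast
  show ?thesis
  proof (intro exI conjI disjI1 allI)
    show "algebraic_int \<gamma>" using \<open>\<gamma> ^ m \<in> \<int>\<close> \<open>m \<ge> 2\<close> by (intro algebraic_int_if_power_in_Ints) auto
    show "\<gamma> ^ m \<in> \<rat>" using \<open>\<gamma> ^ m \<in> \<int>\<close> Ints_subset_Rats by blast
    show "\<alpha> = \<gamma> * p" and "\<beta> = \<gamma> * q" using \<open>\<gamma> \<noteq> 0\<close> by (simp_all add: p_def q_def)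
    show "lucas p q n \<in> \<rat>" for n
      using lucas_rational_if_prod_rational[OF \<open>p + q = 1\<close> nondegenerate_pair_neq[OF pq] \<open>p * q \<in> \<rat>\<close>] .
  qed
qed

end
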